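(* Let $Y$ be a mean zero random variable with variance $\sigma^2\in(0,\infty)$ and moment generating function $m(s)=\mathbb{E}[e^{sY}]$, and let $Y^*$, defined on the same probability space, have the $Y$-zero biased distribution. If $Y^*-Y\le c$ almost surely for some $c>0$ and $m(s)$ is finite for all $s\in[0,1/c)$, then for every $\theta\in(0,1/c)$, $$m(\theta)\le \exp\left(\frac{\sigma^2\theta^2}{2(1-\theta c)}\right).$$
   Context: Zero bias distribution: for a mean zero random variable $Y$ with finite positive variance $\sigma^2$, a random variable $Y^*$ is said to have the $Y$-zero biased distribution if $\mathbb{E}[Yf(Y)]=\sigma^2\mathbb{E}[f'(Y^* )]$ for all absolutely continuous functions $f$ for which the expectation of either side exists. *)

theory Defs
  imports "HOL-Probability.Probability"
begin

definition abs_cont_on_interval :: "(real \<Rightarrow> real) \<Rightarrow> real \<Rightarrow> real \<Rightarrow> bool" where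
  "abs_cont_on_interval f a b \<longleftrightarrow>
     (\<forall>\<epsilon>>0. \<exists>\<delta>>0. \<forall>(n::nat) (l::nat \<Rightarrow> real) (r::nat \<Rightarrow> real).
        (\<forall>i<n. a \<le> l i \<and> l i \<le> r i \<and> r i \<le> b) \<and>
        (\<forall>i<n. \<forall>j<n. i \<noteq> j \<longrightarrow> r i \<le> l j \<or> r j \<le> l i) \<and>
        (\<Sum>i<n. r i - l i) < \<delta>
        \<longrightarrow> (\<Sum>i<n. \<bar>f (r i) - f (l i)\<bar>) < \<epsilon>)"

definition abs_cont_fun :: "(real \<Rightarrow> real) \<Rightarrow> bool" where
  "abs_cont_fun f \<longleftrightarrow> (\<forall>a b. a \<le> b \<longrightarrow> abs_cont_on_interval f a b)"

text \<open>Ystar has the Y-zero biased distribution (sigma2 = variance of Y):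
  for every absolutely continuous f and every version f' of its (a.e.) derivative,
  whenever the expectations exist, E[Y f(Y)] = sigma2 * E[f'(Ystar)].\<close>
definition zero_biased :: "'a measure \<Rightarrow> ('a \<Rightarrow> real) \<Rightarrow> ('a \<Rightarrow> real) \<Rightarrow> real \<Rightarrow> bool" where
  "zero_biased M Y Ystar sigma2 \<longleftrightarrow>
     (\<forall>f f'. abs_cont_fun f \<and> (AE x in lborel. (f has_real_derivative f' x) (at x)) \<and>
        integrable M (\<lambda>\<omega>. Y \<omega> * f (Y \<omega>)) \<and> integrable M (\<lambda>\<omega>. f' (Ystar \<omega>))
        \<longrightarrow> (\<integral>\<omega>. Y \<omega> * f (Y \<omega>) \<partial>M) = sigma2 * (\<integral>\<omega>. f' (Ystar \<omega>) \<partial>M))"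

end

theory Submission
  imports Defs
begin

text \<open>Let m(t) = E[exp(tY)] and phi(t) = sigma^2 t^2 / (2 (1 - tc)). The zero-bias identity
  for f(y) = exp(ty) gives m'(t) = E[Y exp(tY)] = sigma^2 t E[exp(tY*)], and Y* <= Y + c turns this
  into m'(t) <= sigma^2 t exp(tc) m(t) <= sigma^2 t m(t) / (1 - tc) <= phi'(t) m(t). Hence
  m exp(-phi) is nonincreasing on [0, theta], and m(0) = 1, phi(0) = 0.
  Differentiability of m needs no differentiation under the integral: by convexity of exp, the
  lines through (t, m t) with slopes E[Y exp(tY)] = sigma^2 t E[exp(tY*)] support m, and these
  slopes are continuous in t.\<close>

lemma abs_cont_on_interval_if_lipschitz_on:
  assumes "L-lipschitz_on {a..b} f"
  shows "abs_cont_on_interval f a b"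
  unfolding abs_cont_on_interval_def
proof (intro allI impI)
  fix \<epsilon> :: real assume "\<epsilon> > 0"
  have "L \<ge> 0" using assms by (rule lipschitz_on_nonneg)
  show "\<exists>\<delta>>0. \<forall>(n::nat) l r. (\<forall>i<n. a \<le> l i \<and> l i \<le> r i \<and> r i \<le> b) \<and>
        (\<forall>i<n. \<forall>j<n. i \<noteq> j \<longrightarrow> r i \<le> l j \<or> r j \<le> l i) \<and>
        (\<Sum>i<n. r i - l i) < \<delta> \<longrightarrow> (\<Sum>i<n. \<bar>f (r i) - f (l i)\<bar>) < \<epsilon>"
  proof (intro exI[of _ "\<epsilon> / (L + 1)"] conjI allI impI)
    show "\<epsilon> / (L + 1) > 0" using \<open>\<epsilon> > 0\<close> \<open>L \<ge> 0\<close> by simp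
    fix n :: nat and l r :: "nat \<Rightarrow> real"
    assume h: "(\<forall>i<n. a \<le> l i \<and> l i \<le> r i \<and> r i \<le> b) \<and>
        (\<forall>i<n. \<forall>j<n. i \<noteq> j \<longrightarrow> r i \<le> l j \<or> r j \<le> l i) \<and>
        (\<Sum>i<n. r i - l i) < \<epsilon> / (L + 1)"
    have "(\<Sum>i<n. \<bar>f (r i) - f (l i)\<bar>) \<le> (\<Sum>i<n. L * (r i - l i))"
    proof (intro sum_mono)
      fix i assume "i \<in> {..<n}"
      then have "dist (f (r i)) (f (l i)) \<le> L * dist (r i) (l i)"
        using h by (intro lipschitz_onD[OF assms]) auto
      then show "\<bar>f (r i) - f (l i)\<bar> \<le> L * (r i - l i)"
        using h \<open>i \<in> {..<n}\<close> by (simp add: dist_real_def)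
    qed
    also have "\<dots> = L * (\<Sum>i<n. r i - l i)" by (simp add: sum_distrib_left)
    also have "\<dots> \<le> L * (\<epsilon> / (L + 1))" using h \<open>L \<ge> 0\<close> by (intro mult_left_mono) auto
    also have "\<dots> < \<epsilon>" using \<open>\<epsilon> > 0\<close> \<open>L \<ge> 0\<close> by (simp add: field_simps)
    finally show "(\<Sum>i<n. \<bar>f (r i) - f (l i)\<bar>) < \<epsilon>" .
  qed
qed

lemma abs_cont_fun_if_continuous_deriv:
  assumes deriv: "\<And>x. (f has_real_derivative f' x) (at x)" and "continuous_on UNIV f'"
  shows "abs_cont_fun f"
  unfolding abs_cont_fun_def
proof (intro allI impI)
  fix a b :: real assume "a \<le> b"
  have "compact (f' ` {a..b})"
    by (rule compact_continuous_image) (use assms(2) continuous_on_subset in auto)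
  then obtain B where B: "\<And>x. x \<in> {a..b} \<Longrightarrow> norm (f' x) \<le> B"
    by (metis compact_imp_bounded bounded_iff imageI)
  have "B-lipschitz_on {a..b} f"
  proof (rule lipschitz_onI)
    fix x y assume "x \<in> {a..b}" "y \<in> {a..b}"
    then show "dist (f x) (f y) \<le> B * dist x y"
      using field_differentiable_bound[of "{a..b}" f f' B] deriv B
      by (simp add: dist_norm has_field_derivative_at_within)
  next
    show "0 \<le> B" using B[of a] \<open>a \<le> b\<close> by (auto intro: order_trans[OF norm_ge_zero])
  qed
  then show "abs_cont_on_interval f a b" by (rule abs_cont_on_interval_if_lipschitz_on)
qed

lemma abs_cont_fun_exp_mult: "abs_cont_fun (\<lambda>x. exp (t * x))"
  by (rule abs_cont_fun_if_continuous_deriv[where f' = "\<lambda>x. t * exp (t * x)"])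
    (auto intro!: derivative_eq_intros continuous_intros)

lemma has_real_derivative_if_supporting_lines:
  fixes f g :: "real \<Rightarrow> real"
  assumes "open S" "t \<in> S"
    and supp: "\<And>s u. s \<in> S \<Longrightarrow> u \<in> S \<Longrightarrow> f u + (s - u) * g u \<le> f s"
    and "isCont g t"
  shows "(f has_real_derivative g t) (at t)"
proof -
  have quotient_between: "\<bar>(f s - f t) / (s - t) - g t\<bar> \<le> \<bar>g s - g t\<bar>"
    if "s \<in> S" "s \<noteq> t" for s
  proof (cases "s < t")
    case True
    then have "g s \<le> (f s - f t) / (s - t) \<and> (f s - f t) / (s - t) \<le> g t"
      using supp[of s t] supp[of t s] that \<open>t \<in> S\<close> by (simp add: field_simps)
    then show ?thesis by linarith
  next
    case False
    then have "g t \<le> (f s - f t) / (s - t) \<and> (f s - f t) / (s - t) \<le> g s"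
      using supp[of s t] supp[of t s] that \<open>t \<in> S\<close> by (simp add: field_simps)
    then show ?thesis by linarith
  qed
  have "\<forall>\<^sub>F s in at t. s \<in> S \<and> s \<noteq> t"
    unfolding eventually_at_filter
    using eventually_nhds_in_open[OF assms(1,2)] by eventually_elim auto
  then have "\<forall>\<^sub>F s in at t. norm ((f s - f t) / (s - t) - g t) \<le> norm (g s - g t)"
    by eventually_elim (simp add: quotient_between)
  moreover have "((\<lambda>s. norm (g s - g t)) \<longlongrightarrow> 0) (at t)"
    using \<open>isCont g t\<close> by (intro tendsto_norm_zero) (simp add: isCont_def LIM_zero_iff)
  ultimately have "((\<lambda>s. (f s - f t) / (s - t) - g t) \<longlongrightarrow> 0) (at t)"
    by (rule Lim_null_comparison)
  then show ?thesis by (simp add: has_field_derivative_iff LIM_zero_iff)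
qed

lemma le_exp_diff_if_deriv_le:
  fixes f \<phi> f' \<phi>' :: "real \<Rightarrow> real"
  assumes "a \<le> b" "continuous_on {a..b} f" "continuous_on {a..b} \<phi>"
    and "\<And>x. a < x \<Longrightarrow> x < b \<Longrightarrow> (f has_real_derivative f' x) (at x)"
    and "\<And>x. a < x \<Longrightarrow> x < b \<Longrightarrow> (\<phi> has_real_derivative \<phi>' x) (at x)"
    and "\<And>x. a < x \<Longrightarrow> x < b \<Longrightarrow> f' x \<le> \<phi>' x * f x"
  shows "f b \<le> f a * exp (\<phi> b - \<phi> a)"
proof -
  define \<psi> where "\<psi> x = f x * exp (- \<phi> x)" for x
  have "\<psi> b \<le> \<psi> a"
  proof (rule DERIV_nonpos_imp_decreasing_open[OF \<open>a \<le> b\<close>])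
    fix x assume x: "a < x" "x < b"
    have "(\<psi> has_real_derivative exp (- \<phi> x) * (f' x - \<phi>' x * f x)) (at x)"
      unfolding \<psi>_def using assms(4,5)[OF x]
      by (auto intro!: derivative_eq_intros simp: algebra_simps)
    moreover have "exp (- \<phi> x) * (f' x - \<phi>' x * f x) \<le> 0"
      using assms(6)[OF x] by (simp add: mult_nonneg_nonpos)
    ultimately show "\<exists>y. (\<psi> has_real_derivative y) (at x) \<and> y \<le> 0" by blast
  next
    show "continuous_on {a..b} \<psi>"
      unfolding \<psi>_def using assms(2,3) by (intro continuous_intros)
  qed
  then show ?thesis by (simp add: \<psi>_def exp_minus exp_diff field_simps)
qed

lemma exp_mult_le_one_plus_exp_mult:
  fixes t b z :: real
  assumes "0 \<le> t" "t \<le> b"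
  shows "exp (t * z) \<le> 1 + exp (b * z)"
proof (cases "z \<ge> 0")
  case True
  then have "exp (t * z) \<le> exp (b * z)" using mult_right_mono[OF assms(2) True] by simp
  then show ?thesis by linarith
next
  case False
  then have "exp (t * z) \<le> 1" using assms by (simp add: mult_nonneg_nonpos)
  then show ?thesis by (simp add: add_increasing2)
qed

lemma abs_mult_exp_mult_le:
  fixes t b z :: real
  assumes "0 < t" "t < b"
  shows "\<bar>z * exp (t * z)\<bar> \<le> 1 / t + exp (b * z) / (b - t)"
proof (cases "z \<ge> 0")
  case True
  have "(b - t) * z * exp (t * z) \<le> exp ((b - t) * z) * exp (t * z)"
    using exp_gt_self[of "(b - t) * z"] by (intro mult_right_mono) simp_all
  also have "\<dots> = exp (b * z)" by (simp flip: exp_add add: algebra_simps)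
  finally have "\<bar>z * exp (t * z)\<bar> \<le> exp (b * z) / (b - t)"
    using assms True by (simp add: field_simps)
  then show ?thesis using assms by (simp add: add_increasing)
next
  case False
  have "t * (- z) * exp (t * z) \<le> exp (t * (- z)) * exp (t * z)"
    using exp_gt_self[of "t * (- z)"] by (intro mult_right_mono) simp_all
  also have "\<dots> = 1" by (simp flip: exp_add)
  finally have "\<bar>z * exp (t * z)\<bar> \<le> 1 / t"
    using assms False by (simp add: field_simps abs_mult)
  then show ?thesis using assms by (simp add: add_increasing2)
qed

lemma exp_le_one_div_one_minus:
  fixes x :: real
  assumes "x < 1"
  shows "exp x \<le> 1 / (1 - x)"
proof -
  have "exp x * (1 - x) \<le> exp x * exp (- x)"
    using exp_ge_add_one_self[of "- x"] by (intro mult_left_mono) auto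
  then show ?thesis using assms by (simp add: exp_minus field_simps)
qed

lemma div_one_minus_le:
  fixes a y :: real
  assumes "0 \<le> a" "0 \<le> y" "y < 1"
  shows "a / (1 - y) \<le> a * (2 - y) / (2 * (1 - y)\<^sup>2)"
proof -
  have cancel: "1 / d = 2 * d / (2 * d\<^sup>2)" if "d \<noteq> 0" for d :: real
    using that by (simp add: power2_eq_square)
  have "1 / (1 - y) = 2 * (1 - y) / (2 * (1 - y)\<^sup>2)" by (rule cancel) (use assms in simp)
  also have "\<dots> \<le> (2 - y) / (2 * (1 - y)\<^sup>2)" using assms by (intro divide_right_mono) auto
  finally have "a * (1 / (1 - y)) \<le> a * ((2 - y) / (2 * (1 - y)\<^sup>2))"
    using assms(1) by (rule mult_left_mono)
  then show ?thesis by simp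
qed

lemma has_real_derivative_sub_gamma_exponent:
  fixes v c x :: real
  assumes "x * c < 1"
  shows "((\<lambda>s. v * s\<^sup>2 / (2 * (1 - s * c))) has_real_derivative
           v * x * (2 - x * c) / (2 * (1 - x * c)\<^sup>2)) (at x)"
proof -
  have "1 - x * c \<noteq> 0" using assms by simp
  then show ?thesis
    by (auto intro!: derivative_eq_intros simp: divide_simps) (simp add: algebra_simps power2_eq_square)
qed

context finite_measure
begin

lemma integrable_exp_mult_le:
  fixes Z :: "'a \<Rightarrow> real"
  assumes "Z \<in> borel_measurable M" "integrable M (\<lambda>\<omega>. exp (b * Z \<omega>))" "0 \<le> t" "t \<le> b"
  shows "integrable M (\<lambda>\<omega>. exp (t * Z \<omega>))"
  by (rule Bochner_Integration.integrable_bound[where f = "\<lambda>\<omega>. 1 + exp (b * Z \<omega>)"])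
    (use assms exp_mult_le_one_plus_exp_mult in auto)

lemma integrable_mult_exp_mult:
  fixes Z :: "'a \<Rightarrow> real"
  assumes "Z \<in> borel_measurable M" "integrable M (\<lambda>\<omega>. exp (b * Z \<omega>))" "0 < t" "t < b"
  shows "integrable M (\<lambda>\<omega>. Z \<omega> * exp (t * Z \<omega>))"
  by (rule Bochner_Integration.integrable_bound[where f = "\<lambda>\<omega>. 1 / t + exp (b * Z \<omega>) / (b - t)"])
    (use assms abs_mult_exp_mult_le in \<open>auto intro: order_trans[OF _ abs_ge_self]\<close>)

lemma continuous_on_integral_exp_mult:
  fixes Z :: "'a \<Rightarrow> real"
  assumes "Z \<in> borel_measurable M" "integrable M (\<lambda>\<omega>. exp (b * Z \<omega>))"
  shows "continuous_on {0..b} (\<lambda>t. \<integral>\<omega>. exp (t * Z \<omega>) \<partial>M)"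
proof (rule continuous_on_sequentiallyI)
  fix u :: "nat \<Rightarrow> real" and t assume u: "\<forall>n. u n \<in> {0..b}" "u \<longlonglongrightarrow> t"
  show "(\<lambda>n. \<integral>\<omega>. exp (u n * Z \<omega>) \<partial>M) \<longlonglongrightarrow> \<integral>\<omega>. exp (t * Z \<omega>) \<partial>M"
  proof (rule integral_dominated_convergence[where w = "\<lambda>\<omega>. 1 + exp (b * Z \<omega>)"])
    show "AE \<omega> in M. norm (exp (u n * Z \<omega>)) \<le> 1 + exp (b * Z \<omega>)" for n
      using u(1) exp_mult_le_one_plus_exp_mult[of "u n" b] by auto
    show "AE \<omega> in M. (\<lambda>n. exp (u n * Z \<omega>)) \<longlonglongrightarrow> exp (t * Z \<omega>)"
      using u(2) by (auto intro!: tendsto_intros)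
  qed (use assms in auto)
qed

end

lemma integral_exp_mult_ge_tangent:
  fixes Z :: "'a \<Rightarrow> real"
  assumes "integrable M (\<lambda>\<omega>. exp (s * Z \<omega>))" "integrable M (\<lambda>\<omega>. exp (t * Z \<omega>))"
    and "integrable M (\<lambda>\<omega>. Z \<omega> * exp (t * Z \<omega>))"
  shows "(\<integral>\<omega>. exp (t * Z \<omega>) \<partial>M) + (s - t) * (\<integral>\<omega>. Z \<omega> * exp (t * Z \<omega>) \<partial>M)
           \<le> (\<integral>\<omega>. exp (s * Z \<omega>) \<partial>M)"
proof -
  have "exp (t * z) + (s - t) * (z * exp (t * z)) \<le> exp (s * z)" for z :: real
  proof -
    have "exp (t * z) * (1 + (s - t) * z) \<le> exp (t * z) * exp ((s - t) * z)"
      using exp_ge_add_one_self[of "(s - t) * z"] by simp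
    then show ?thesis by (simp flip: exp_add add: algebra_simps)
  qed
  then have "(\<integral>\<omega>. exp (t * Z \<omega>) + (s - t) * (Z \<omega> * exp (t * Z \<omega>)) \<partial>M) \<le> (\<integral>\<omega>. exp (s * Z \<omega>) \<partial>M)"
    using assms by (intro integral_mono) auto
  then show ?thesis using assms by simp
qed

lemma
  fixes W Z :: "'a \<Rightarrow> real"
  assumes "AE \<omega> in M. W \<omega> - Z \<omega> \<le> c" "0 \<le> t"
    and "W \<in> borel_measurable M" "integrable M (\<lambda>\<omega>. exp (t * Z \<omega>))"
  shows integrable_exp_mult_shift: "integrable M (\<lambda>\<omega>. exp (t * W \<omega>))"
    and integral_exp_mult_shift_le:
      "(\<integral>\<omega>. exp (t * W \<omega>) \<partial>M) \<le> exp (t * c) * (\<integral>\<omega>. exp (t * Z \<omega>) \<partial>M)"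
proof -
  have pointwise: "AE \<omega> in M. exp (t * W \<omega>) \<le> exp (t * c) * exp (t * Z \<omega>)"
    using assms(1)
  proof eventually_elim
    case (elim \<omega>)
    then have "t * W \<omega> \<le> t * c + t * Z \<omega>"
      using mult_left_mono[OF elim \<open>0 \<le> t\<close>] by (simp add: algebra_simps)
    then show ?case by (simp flip: exp_add)
  qed
  show int: "integrable M (\<lambda>\<omega>. exp (t * W \<omega>))"
    by (rule Bochner_Integration.integrable_bound[where f = "\<lambda>\<omega>. exp (t * c) * exp (t * Z \<omega>)"])
      (use assms pointwise in auto)
  have "(\<integral>\<omega>. exp (t * W \<omega>) \<partial>M) \<le> (\<integral>\<omega>. exp (t * c) * exp (t * Z \<omega>) \<partial>M)"
    using int assms(4) pointwise by (intro integral_mono_AE) auto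
  then show "(\<integral>\<omega>. exp (t * W \<omega>) \<partial>M) \<le> exp (t * c) * (\<integral>\<omega>. exp (t * Z \<omega>) \<partial>M)"
    by simp
qed

lemma shifted_exp_moment_le_sub_gamma_deriv:
  fixes W Z :: "'a \<Rightarrow> real"
  assumes "AE \<omega> in M. W \<omega> - Z \<omega> \<le> c" "W \<in> borel_measurable M"
    and "integrable M (\<lambda>\<omega>. exp (t * Z \<omega>))" "0 \<le> v" "0 \<le> t" "0 \<le> c" "t * c < 1"
  shows "v * t * (\<integral>\<omega>. exp (t * W \<omega>) \<partial>M)
           \<le> v * t * (2 - t * c) / (2 * (1 - t * c)\<^sup>2) * (\<integral>\<omega>. exp (t * Z \<omega>) \<partial>M)"
proof -
  define m where "m = (\<integral>\<omega>. exp (t * Z \<omega>) \<partial>M)"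
  have "0 \<le> v * t" "0 \<le> m" using assms(4,5) by (simp_all add: m_def)
  have "(\<integral>\<omega>. exp (t * W \<omega>) \<partial>M) \<le> exp (t * c) * m"
    unfolding m_def using assms(1,5,2,3) by (rule integral_exp_mult_shift_le)
  also have "\<dots> \<le> m / (1 - t * c)"
    using mult_right_mono[OF exp_le_one_div_one_minus[OF assms(7)] \<open>0 \<le> m\<close>] by simp
  finally have "v * t * (\<integral>\<omega>. exp (t * W \<omega>) \<partial>M) \<le> v * t * m / (1 - t * c)"
    using mult_left_mono[OF _ \<open>0 \<le> v * t\<close>] by fastforce
  also have "\<dots> \<le> v * t * m * (2 - t * c) / (2 * (1 - t * c)\<^sup>2)"
    using \<open>0 \<le> v * t\<close> \<open>0 \<le> m\<close> assms(5,6,7) by (intro div_one_minus_le) auto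
  finally show ?thesis by (simp add: m_def ac_simps)
qed

lemma zero_biased_exp_mult:
  fixes Y Ystar :: "'a \<Rightarrow> real"
  assumes "zero_biased M Y Ystar \<sigma>2"
    and "integrable M (\<lambda>\<omega>. Y \<omega> * exp (t * Y \<omega>))" "integrable M (\<lambda>\<omega>. exp (t * Ystar \<omega>))"
  shows "(\<integral>\<omega>. Y \<omega> * exp (t * Y \<omega>) \<partial>M) = \<sigma>2 * t * (\<integral>\<omega>. exp (t * Ystar \<omega>) \<partial>M)"
proof -
  have "AE x in lborel. ((\<lambda>y. exp (t * y)) has_real_derivative t * exp (t * x)) (at x)"
    by (auto intro!: derivative_eq_intros)
  then have "(\<integral>\<omega>. Y \<omega> * exp (t * Y \<omega>) \<partial>M) = \<sigma>2 * (\<integral>\<omega>. t * exp (t * Ystar \<omega>) \<partial>M)"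
    using assms(1)[unfolded zero_biased_def, rule_format, of "\<lambda>y. exp (t * y)" "\<lambda>x. t * exp (t * x)"]
      abs_cont_fun_exp_mult assms(2,3) by auto
  then show ?thesis by simp
qed

lemma (in prob_space) has_real_derivative_mgf_if_zero_biased:
  fixes Y Ystar :: "'a \<Rightarrow> real"
  assumes "Y \<in> borel_measurable M" "Ystar \<in> borel_measurable M"
    and "zero_biased M Y Ystar \<sigma>2" "AE \<omega> in M. Ystar \<omega> - Y \<omega> \<le> c"
    and "integrable M (\<lambda>\<omega>. exp (b * Y \<omega>))" "0 < t" "t < b"
  shows "((\<lambda>s. \<integral>\<omega>. exp (s * Y \<omega>) \<partial>M) has_real_derivative
           \<sigma>2 * t * (\<integral>\<omega>. exp (t * Ystar \<omega>) \<partial>M)) (at t)"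
proof (rule has_real_derivative_if_supporting_lines[where S = "{0<..<b}"])
  have int_exp: "integrable M (\<lambda>\<omega>. exp (s * Y \<omega>))" if "0 \<le> s" "s \<le> b" for s
    using integrable_exp_mult_le assms(1,5) that .
  have int_exp_star: "integrable M (\<lambda>\<omega>. exp (s * Ystar \<omega>))" if "0 \<le> s" "s \<le> b" for s
    using integrable_exp_mult_shift assms(4) that(1) assms(2) int_exp[OF that] .
  show "(\<integral>\<omega>. exp (u * Y \<omega>) \<partial>M) + (s - u) * (\<sigma>2 * u * (\<integral>\<omega>. exp (u * Ystar \<omega>) \<partial>M))
          \<le> (\<integral>\<omega>. exp (s * Y \<omega>) \<partial>M)" if "s \<in> {0<..<b}" "u \<in> {0<..<b}" for s u
  proof -
    have "integrable M (\<lambda>\<omega>. Y \<omega> * exp (u * Y \<omega>))"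
      using integrable_mult_exp_mult assms(1,5) that(2) by auto
    then show ?thesis
      using integral_exp_mult_ge_tangent[of M s Y u] zero_biased_exp_mult[OF assms(3)]
        int_exp int_exp_star that by auto
  qed
  have "continuous_on {0..b} (\<lambda>s. \<integral>\<omega>. exp (s * Ystar \<omega>) \<partial>M)"
    using continuous_on_integral_exp_mult assms(2) int_exp_star \<open>0 < t\<close> \<open>t < b\<close> by auto
  then have "isCont (\<lambda>s. \<integral>\<omega>. exp (s * Ystar \<omega>) \<partial>M) t"
    using \<open>0 < t\<close> \<open>t < b\<close> continuous_on_interior by fastforce
  then show "isCont (\<lambda>u. \<sigma>2 * u * (\<integral>\<omega>. exp (u * Ystar \<omega>) \<partial>M)) t"
    by (intro continuous_intros)
qed (use assms in auto)

theorem mainTheorem4: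
  fixes M :: "'a measure" and Y Ystar :: "'a \<Rightarrow> real" and \<sigma> c \<theta> :: real
  assumes "prob_space M"
    and "Y \<in> borel_measurable M" and "Ystar \<in> borel_measurable M"
    and "integrable M Y" and "prob_space.expectation M Y = 0"
    and "integrable M (\<lambda>\<omega>. (Y \<omega>)\<^sup>2)"
    and "\<sigma> > 0" and "prob_space.variance M Y = \<sigma>\<^sup>2"
    and "zero_biased M Y Ystar (\<sigma>\<^sup>2)"
    and "c > 0" and "AE \<omega> in M. Ystar \<omega> - Y \<omega> \<le> c"
    and "\<forall>s. 0 \<le> s \<and> s < 1 / c \<longrightarrow> integrable M (\<lambda>\<omega>. exp (s * Y \<omega>))"
    and "0 < \<theta>" and "\<theta> < 1 / c"
  shows "prob_space.expectation M (\<lambda>\<omega>. exp (\<theta> * Y \<omega>))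
           \<le> exp (\<sigma>\<^sup>2 * \<theta>\<^sup>2 / (2 * (1 - \<theta> * c)))"
proof -
  interpret prob_space M by fact
  \<comment> \<open>room above \<open>\<theta>\<close>: \<open>exp (b * Y)\<close> dominates \<open>Y * exp (x * Y)\<close> for \<open>0 < x < b\<close>\<close>
  obtain b where b: "\<theta> < b" "b < 1 / c" using \<open>\<theta> < 1 / c\<close> dense by blast
  have int_b: "integrable M (\<lambda>\<omega>. exp (b * Y \<omega>))" using assms(12) b \<open>0 < \<theta>\<close> by auto
  have "\<theta> * c < 1" using \<open>\<theta> < 1 / c\<close> \<open>c > 0\<close> by (simp add: pos_less_divide_eq)
  then have below_pole: "x * c < 1" if "x \<le> \<theta>" for x
    using mult_right_mono[OF that less_imp_le[OF \<open>c > 0\<close>]] by linarith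
  define m where "m x = expectation (\<lambda>\<omega>. exp (x * Y \<omega>))" for x
  define \<phi> where "\<phi> x = \<sigma>\<^sup>2 * x\<^sup>2 / (2 * (1 - x * c))" for x
  define \<phi>' where "\<phi>' x = \<sigma>\<^sup>2 * x * (2 - x * c) / (2 * (1 - x * c)\<^sup>2)" for x
  have \<phi>_deriv: "(\<phi> has_real_derivative \<phi>' x) (at x)" if "x \<le> \<theta>" for x
    unfolding \<phi>_def \<phi>'_def using below_pole[OF that] by (rule has_real_derivative_sub_gamma_exponent)
  have "m \<theta> \<le> m 0 * exp (\<phi> \<theta> - \<phi> 0)"
  proof (rule le_exp_diff_if_deriv_le[where f' = "\<lambda>x. \<sigma>\<^sup>2 * x * expectation (\<lambda>\<omega>. exp (x * Ystar \<omega>))"])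
    show "continuous_on {0..\<theta>} m"
      unfolding m_def using b
      by (intro continuous_on_subset[OF continuous_on_integral_exp_mult[OF assms(2) int_b]]) auto
    show "continuous_on {0..\<theta>} \<phi>"
      by (rule DERIV_continuous_on, rule has_field_derivative_at_within, rule \<phi>_deriv) auto
    fix x assume x: "0 < x" "x < \<theta>"
    show "(m has_real_derivative \<sigma>\<^sup>2 * x * expectation (\<lambda>\<omega>. exp (x * Ystar \<omega>))) (at x)"
      unfolding m_def using has_real_derivative_mgf_if_zero_biased assms(2,3,9,11) int_b x b by auto
    show "(\<phi> has_real_derivative \<phi>' x) (at x)" using \<phi>_deriv x by simp
    show "\<sigma>\<^sup>2 * x * expectation (\<lambda>\<omega>. exp (x * Ystar \<omega>)) \<le> \<phi>' x * m x"
      unfolding m_def \<phi>'_def using assms(3,11,12) \<open>c > 0\<close> below_pole[of x] x b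
      by (intro shifted_exp_moment_le_sub_gamma_deriv) auto
  qed (use \<open>0 < \<theta>\<close> in auto)
  then show ?thesis by (simp add: m_def \<phi>_def prob_space)
qed

end
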